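(* Let $0<r<1$ and let $T\in C_{1,r}$ act on a Hilbert space $\mathcal H$. Then there exists a unique orthogonal decomposition $\mathcal H=\mathcal H_1\oplus\mathcal H_2$ into closed subspaces reducing $T$ such that (1) $T|_{\mathcal H_1}\in\mathcal C_{1,r}$ and (2) $T|_{\mathcal H_2}$ is a c.n.u. $C_{1,r}$-contraction. Moreover, $\mathcal H_1$ is the maximal closed subspace reducing $T$ restricted to which $T\in\mathcal C_{1,r}$, and $$\mathcal H_1=\bigcap_{k\in\mathbb N}\ \bigcap_{n,m\in(\mathbb N\cup\{0\})^k}\left\{x\in\mathcal H: (1+r^2)\|p_{k,nm}(T)x\|^2-\|Tp_{k,nm}(T)x\|^2-r^2\|T^{-*}p_{k,nm}(T)x\|^2=0\right\},$$ where $p_{k,nm}(T)=T^{n_1}T^{*m_1}\cdots T^{n_k}T^{*m_k}$ for $n=(n_1,\dots,n_k)$, $m=(m_1,\dots,m_k)\in(\mathbb N\cup\{0\})^k$.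
   Context: $C_{1,r}=\{T: T\text{ invertible},\ \|T\|\le1,\ \|rT^{-1}\|\le1\}$. $\mathcal C_{1,r}$ is the class of operators $J$ on a Hilbert space $\mathcal L$ for which there exist orthogonal projections $P_0,P_1$ on $\mathcal L$ with $P_0+P_1=I_{\mathcal L}$ and $J^*J=P_0+r^2P_1$. An operator $T\in C_{1,r}$ on $\mathcal H$ is a c.n.u. $C_{1,r}$-contraction if $\mathcal H$ has no non-zero closed subspace that reduces $T$ to an operator in $\mathcal C_{1,r}$. $T^{-*}=(T^{-1})^*$. *)

theory Defs
  imports "HOL-Analysis.Analysis"
begin

text \<open>A complex Hilbert space, encoded as a real Hilbert space together with an
orthogonal complex structure cJ (multiplication by the imaginary unit):
(a + b i) x = a x + b (cJ x).  The complex inner product is recovered as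
inner x y + i inner x (cJ y); norms coincide.\<close>

class complex_hilbert = real_inner + complete_space +
  fixes cJ :: "'a \<Rightarrow> 'a"
  assumes cJ_add: "cJ (x + y) = cJ x + cJ y"
    and cJ_scaleR: "cJ (c *\<^sub>R x) = c *\<^sub>R cJ x"
    and cJ_cJ: "cJ (cJ x) = - x"
    and cJ_inner: "inner (cJ x) (cJ y) = inner x y"

definition cblin :: "('a::complex_hilbert \<Rightarrow> 'a) \<Rightarrow> bool" where
  "cblin T \<longleftrightarrow> bounded_linear T \<and> (\<forall>x. T (cJ x) = cJ (T x))"

definition closed_csubspace :: "'a::complex_hilbert set \<Rightarrow> bool" where
  "closed_csubspace M \<longleftrightarrow> closed M \<and> subspace M \<and> (\<forall>x\<in>M. cJ x \<in> M)"

definition adj_on :: "'a::complex_hilbert set \<Rightarrow> ('a \<Rightarrow> 'a) \<Rightarrow> 'a \<Rightarrow> 'a" where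
  "adj_on M T y = (SOME z. z \<in> M \<and> (\<forall>x\<in>M. inner (T x) y = inner x z))"

abbreviation adj :: "('a::complex_hilbert \<Rightarrow> 'a) \<Rightarrow> 'a \<Rightarrow> 'a" where
  "adj T \<equiv> adj_on UNIV T"

definition reduces_within :: "'a::complex_hilbert set \<Rightarrow> ('a \<Rightarrow> 'a) \<Rightarrow> 'a set \<Rightarrow> bool" where
  "reduces_within M T N \<longleftrightarrow> closed_csubspace N \<and> N \<subseteq> M \<and>
     (\<forall>x\<in>N. T x \<in> N) \<and> (\<forall>x\<in>N. adj_on M T x \<in> N)"

abbreviation reduces :: "('a::complex_hilbert \<Rightarrow> 'a) \<Rightarrow> 'a set \<Rightarrow> bool" where
  "reduces T N \<equiv> reduces_within UNIV T N"

definition orth_proj_on :: "'a::complex_hilbert set \<Rightarrow> ('a \<Rightarrow> 'a) \<Rightarrow> bool" where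
  "orth_proj_on M P \<longleftrightarrow> cblin P \<and> (\<forall>x\<in>M. P x \<in> M) \<and> (\<forall>x\<in>M. P (P x) = P x) \<and>
     (\<forall>x\<in>M. \<forall>y\<in>M. inner (P x) y = inner x (P y))"

definition C1r_on :: "real \<Rightarrow> 'a::complex_hilbert set \<Rightarrow> ('a \<Rightarrow> 'a) \<Rightarrow> bool" where
  "C1r_on r M T \<longleftrightarrow> (\<forall>x\<in>M. T x \<in> M) \<and>
     (\<exists>S. (\<forall>x\<in>M. S x \<in> M \<and> S (T x) = x \<and> T (S x) = x) \<and>
          (\<forall>x\<in>M. norm (T x) \<le> norm x) \<and> (\<forall>x\<in>M. norm (r *\<^sub>R S x) \<le> norm x))"

definition CC1r_on :: "real \<Rightarrow> 'a::complex_hilbert set \<Rightarrow> ('a \<Rightarrow> 'a) \<Rightarrow> bool" where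
  "CC1r_on r M T \<longleftrightarrow> (\<forall>x\<in>M. T x \<in> M) \<and>
     (\<exists>P0 P1. orth_proj_on M P0 \<and> orth_proj_on M P1 \<and> (\<forall>x\<in>M. P0 x + P1 x = x) \<and>
        (\<forall>x\<in>M. adj_on M T (T x) = P0 x + r\<^sup>2 *\<^sub>R P1 x))"

definition cnu_on :: "real \<Rightarrow> 'a::complex_hilbert set \<Rightarrow> ('a \<Rightarrow> 'a) \<Rightarrow> bool" where
  "cnu_on r M T \<longleftrightarrow> C1r_on r M T \<and>
     \<not> (\<exists>N. reduces_within M T N \<and> N \<noteq> {0} \<and> CC1r_on r N T)"

text \<open>p_{k,nm}(T) = T^{n_1} T^{*m_1} ... T^{n_k} T^{*m_k}, for lists ns, ms of length k.\<close>
definition pword :: "('a::complex_hilbert \<Rightarrow> 'a) \<Rightarrow> nat list \<Rightarrow> nat list \<Rightarrow> 'a \<Rightarrow> 'a" where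
  "pword T ns ms = foldr (\<lambda>(n, m) acc. (T ^^ n) \<circ> (adj T ^^ m) \<circ> acc) (zip ns ms) id"

end

theory Submission
  imports Defs
begin

text \<open>Let A = T*T. The hypotheses say r^2 \<le> A \<le> I, so the defect operator
  D = (1 + r^2) I - A - r^2 A^-1 = (A - r^2)(I - A) A^-1 is nonnegative, and the quantity in
  the theorem is the quadratic form of D at p_{k,nm}(T) x. Hence the intersection in the
  theorem consists of the x all of whose words in T and T* lie in the kernel of D: it is the
  largest subspace reducing T on which D vanishes. On a reducing subspace, D = 0 amounts to
  (A - I)(A - r^2) = 0, i.e. to A being of the form P0 + r^2 P1, so this is also the largest
  reducing subspace on which T lies in \<C>_{1,r}. Its orthogonal complement reduces T and
  T^-1 and contains no nonzero reducing subspace of that kind, so T is c.n.u. there.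
  Conversely, in any such decomposition the first summand lies in the maximal one, and the
  maximal one meets the second summand only in 0 because T is c.n.u. on it.\<close>

section \<open>Orthogonal projections and adjoints in Hilbert space\<close>

lemma linear_coeff_eq_0_if_quadratic_nonneg:
  fixes a b :: real
  assumes "\<And>t. 0 \<le> t\<^sup>2 * b - 2 * t * a"
  shows "a = 0"
proof (rule ccontr)
  assume "a \<noteq> 0"
  define t where "t = a / (\<bar>b\<bar> + 1)"
  have "t * a = a\<^sup>2 / (\<bar>b\<bar> + 1)"
    by (simp add: t_def power2_eq_square)
  then have "t * a > 0"
    using \<open>a \<noteq> 0\<close> by simp
  have "t\<^sup>2 * b \<le> t\<^sup>2 * (\<bar>b\<bar> + 1)"
    by (intro mult_left_mono) auto
  also have "\<dots> = t * a"
    by (simp add: t_def power2_eq_square)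
  finally show False
    using assms[of t] \<open>t * a > 0\<close> by linarith
qed

lemma norm_diff_parallelogram:
  fixes x a b :: "'a::real_inner"
  shows "(norm (a - b))\<^sup>2 =
    2 * (norm (x - a))\<^sup>2 + 2 * (norm (x - b))\<^sup>2 - 4 * (norm (x - (1/2) *\<^sub>R (a + b)))\<^sup>2"
  by (simp add: power2_norm_eq_inner inner_simps algebra_simps inner_commute)

lemma Cauchy_if_norm_diff_sq_le:
  fixes f :: "nat \<Rightarrow> 'a::real_normed_vector"
  assumes "\<And>i j. (norm (f i - f j))\<^sup>2 \<le> g i + g j" "g \<longlonglongrightarrow> 0"
  shows "Cauchy f"
proof (rule CauchyI)
  fix e :: real
  assume "e > 0"
  then have "0 < e\<^sup>2 / 2"
    by simp
  with assms(2) have "eventually (\<lambda>n. g n < e\<^sup>2 / 2) sequentially"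
    by (rule order_tendstoD)
  then obtain N where N: "\<And>n. n \<ge> N \<Longrightarrow> g n < e\<^sup>2 / 2"
    by (auto simp: eventually_sequentially)
  have "norm (f m - f n) < e" if "m \<ge> N" "n \<ge> N" for m n
  proof -
    have "(norm (f m - f n))\<^sup>2 < e\<^sup>2"
      using assms(1)[of m n] N[OF that(1)] N[OF that(2)] by linarith
    then show ?thesis
      using \<open>e > 0\<close> by (simp add: power_less_imp_less_base)
  qed
  then show "\<exists>M. \<forall>m\<ge>M. \<forall>n\<ge>M. norm (f m - f n) < e"
    by blast
qed

lemma nearest_point_exists:
  fixes x :: "'a::{real_inner,complete_space}"
  assumes "closed M" "convex M" "M \<noteq> {}"
  shows "\<exists>m\<in>M. \<forall>u\<in>M. norm (x - m) \<le> norm (x - u)"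
proof -
  define d where "d = infdist x M"
  have d_le: "d\<^sup>2 \<le> (norm (x - u))\<^sup>2" if "u \<in> M" for u
    using infdist_le[OF that, of x] infdist_nonneg[of x M]
    by (simp add: d_def dist_norm power_mono)
  have "\<exists>m\<in>M. (norm (x - m))\<^sup>2 < d\<^sup>2 + 1 / real (Suc n)" for n
  proof -
    have "d < sqrt (d\<^sup>2 + 1 / real (Suc n))"
      by (rule real_less_rsqrt) simp
    then obtain m where "m \<in> M" "dist x m < sqrt (d\<^sup>2 + 1 / real (Suc n))"
      using \<open>M \<noteq> {}\<close> unfolding d_def infdist_def by (auto simp: cINF_less_iff)
    moreover from this have "(norm (x - m))\<^sup>2 < (sqrt (d\<^sup>2 + 1 / real (Suc n)))\<^sup>2"
      by (intro power_strict_mono) (auto simp: dist_norm)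
    ultimately show ?thesis
      by auto
  qed
  then obtain f where f_in: "\<And>n. f n \<in> M"
    and f_near: "\<And>n. (norm (x - f n))\<^sup>2 < d\<^sup>2 + 1 / real (Suc n)"
    by metis
  have "(norm (f i - f j))\<^sup>2 \<le> 2 / real (Suc i) + 2 / real (Suc j)" for i j
  proof -
    have "(1/2) *\<^sub>R (f i + f j) \<in> M"
      using f_in assms(2) by (simp add: convex_def scaleR_right_distrib)
    then show ?thesis
      using d_le norm_diff_parallelogram[of "f i" "f j" x] f_near[of i] f_near[of j] by fastforce
  qed
  moreover have "(\<lambda>n. 2 / real (Suc n)) \<longlonglongrightarrow> 0"
    using tendsto_mult[OF tendsto_const[of 2] LIMSEQ_inverse_real_of_nat]
    by (simp add: inverse_eq_divide)
  ultimately have "Cauchy f"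
    by (rule Cauchy_if_norm_diff_sq_le)
  then obtain m where lim: "f \<longlonglongrightarrow> m"
    using Cauchy_convergent_iff convergent_def by blast
  have "m \<in> M"
    using closed_sequentially[OF assms(1)] f_in lim by blast
  have "(\<lambda>n. (norm (x - f n))\<^sup>2) \<longlonglongrightarrow> (norm (x - m))\<^sup>2"
    by (intro tendsto_intros lim)
  moreover have "(\<lambda>n. d\<^sup>2 + 1 / real (Suc n)) \<longlonglongrightarrow> d\<^sup>2 + 0"
    by (intro tendsto_intros LIMSEQ_inverse_real_of_nat[unfolded inverse_eq_divide])
  ultimately have "(norm (x - m))\<^sup>2 \<le> d\<^sup>2"
    using f_near by (intro LIMSEQ_le) (auto intro: less_imp_le)
  with d_le \<open>m \<in> M\<close> show ?thesis
    by (meson order_trans power2_le_imp_le norm_ge_zero)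
qed

lemma orthogonal_projection_exists:
  fixes x :: "'a::{real_inner,complete_space}"
  assumes "closed M" "subspace M"
  shows "\<exists>m\<in>M. x - m \<in> orthogonal_comp M"
proof -
  obtain m where "m \<in> M" and nearest: "\<And>u. u \<in> M \<Longrightarrow> norm (x - m) \<le> norm (x - u)"
    using nearest_point_exists[OF assms(1) subspace_imp_convex[OF assms(2)]] assms(2) subspace_0
    by blast
  have "inner u (x - m) = 0" if "u \<in> M" for u
  proof (rule linear_coeff_eq_0_if_quadratic_nonneg)
    fix t :: real
    have "m + t *\<^sub>R u \<in> M"
      using that \<open>m \<in> M\<close> assms(2) by (simp add: subspace_add subspace_scale)
    then have "(norm (x - m))\<^sup>2 \<le> (norm (x - (m + t *\<^sub>R u)))\<^sup>2"
      using nearest by (simp add: power_mono)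
    then show "0 \<le> t\<^sup>2 * inner u u - 2 * t * inner u (x - m)"
      unfolding power2_norm_eq_inner
      by (simp add: inner_simps power2_eq_square algebra_simps inner_commute)
  qed
  then show ?thesis
    using \<open>m \<in> M\<close> by (auto simp: orthogonal_comp_def orthogonal_def)
qed

lemma riesz_representation:
  fixes f :: "'a::{real_inner,complete_space} \<Rightarrow> real"
  assumes "bounded_linear f"
  shows "\<exists>z. \<forall>x. f x = inner x z"
proof (cases "\<forall>x. f x = 0")
  case True
  then show ?thesis
    by (intro exI[of _ 0]) simp
next
  case False
  then obtain x0 where "f x0 \<noteq> 0"
    by blast
  interpret f: bounded_linear f
    by fact
  let ?K = "{x. f x = 0}"
  have "closed ?K"
    by (intro closed_Collect_eq continuous_intros f.continuous_on continuous_on_id)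
  moreover have "subspace ?K"
    by (auto simp: subspace_def f.add f.scale)
  ultimately obtain m where "m \<in> ?K" and w_orth: "x0 - m \<in> orthogonal_comp ?K"
    using orthogonal_projection_exists by blast
  define w where "w = x0 - m"
  have "f w \<noteq> 0"
    using \<open>m \<in> ?K\<close> \<open>f x0 \<noteq> 0\<close> by (simp add: w_def f.diff)
  then have "inner w w \<noteq> 0"
    by (auto simp: f.zero)
  have "f x = inner x ((f w / inner w w) *\<^sub>R w)" for x
  proof -
    have "x - (f x / f w) *\<^sub>R w \<in> ?K"
      using \<open>f w \<noteq> 0\<close> by (simp add: f.diff f.scale)
    then have "inner (x - (f x / f w) *\<^sub>R w) w = 0"
      using w_orth by (simp add: w_def orthogonal_comp_def orthogonal_def)
    then show ?thesis
      using \<open>f w \<noteq> 0\<close> \<open>inner w w \<noteq> 0\<close> by (simp add: inner_diff_left field_simps)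
  qed
  then show ?thesis
    by blast
qed

lemma adj_on_eqI:
  assumes "subspace M" "z \<in> M" "\<And>x. x \<in> M \<Longrightarrow> inner (U x) y = inner x z"
  shows "adj_on M U y = z"
proof -
  have "\<exists>z. z \<in> M \<and> (\<forall>x\<in>M. inner (U x) y = inner x z)"
    using assms by blast
  from someI_ex[OF this] have adj_in: "adj_on M U y \<in> M"
    and adj_inner: "\<And>x. x \<in> M \<Longrightarrow> inner (U x) y = inner x (adj_on M U y)"
    unfolding adj_on_def by blast+
  have "z - adj_on M U y \<in> M"
    using assms(1,2) adj_in by (simp add: subspace_diff)
  from assms(3)[OF this] adj_inner[OF this]
  have "inner (z - adj_on M U y) (z - adj_on M U y) = 0"
    by (simp add: inner_diff_left inner_diff_right inner_commute)
  then show ?thesis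
    by simp
qed

lemma inner_adj:
  fixes U :: "'a::complex_hilbert \<Rightarrow> 'a"
  assumes "bounded_linear U"
  shows "inner (U x) y = inner x (adj U y)"
proof -
  have "bounded_linear (\<lambda>x. inner (U x) y)"
    using bounded_linear_compose[OF bounded_linear_inner_left assms] .
  then obtain z where "\<forall>x. inner (U x) y = inner x z"
    using riesz_representation by blast
  then show ?thesis
    using adj_on_eqI[of UNIV z U y] by simp
qed

lemma adj_on_eq_adj:
  fixes U :: "'a::complex_hilbert \<Rightarrow> 'a"
  assumes "bounded_linear U" "subspace M" "\<And>x. x \<in> M \<Longrightarrow> adj U x \<in> M" "y \<in> M"
  shows "adj_on M U y = adj U y"
  using assms by (intro adj_on_eqI) (auto simp: inner_adj)

lemma inner_adj_left:
  fixes U :: "'a::complex_hilbert \<Rightarrow> 'a"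
  assumes "bounded_linear U"
  shows "inner (adj U x) y = inner x (U y)"
  by (metis inner_adj[OF assms] inner_commute)

lemma bounded_linear_adj:
  fixes U :: "'a::complex_hilbert \<Rightarrow> 'a"
  assumes "bounded_linear U"
  shows "bounded_linear (adj U)"
proof -
  have add: "adj U (a + b) = adj U a + adj U b" for a b
    by (metis vector_eq_ldot inner_adj[OF assms] inner_add_right)
  have scale: "adj U (c *\<^sub>R a) = c *\<^sub>R adj U a" for c a
    by (metis vector_eq_ldot inner_adj[OF assms] inner_scaleR_right)
  obtain K where "K > 0" and K: "\<And>x. norm (U x) \<le> norm x * K"
    using bounded_linear.pos_bounded[OF assms] by blast
  have "norm (adj U y) \<le> norm y * K" for y
  proof -
    have "norm (adj U y) * norm (adj U y) = inner (U (adj U y)) y"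
      by (simp add: inner_adj[OF assms] flip: power2_norm_eq_inner power2_eq_square)
    also have "\<dots> \<le> norm (U (adj U y)) * norm y"
      by (metis Cauchy_Schwarz_ineq2 abs_le_D1)
    also have "\<dots> \<le> (norm (adj U y) * K) * norm y"
      using K by (intro mult_right_mono) auto
    finally have "norm (adj U y) * norm (adj U y) \<le> norm (adj U y) * (norm y * K)"
      by (simp add: ac_simps)
    then show ?thesis
      using \<open>K > 0\<close> by (cases "adj U y = 0") (auto simp: mult_le_cancel_left)
  qed
  then show ?thesis
    by (intro bounded_linear_intro[OF add scale])
qed

lemma cJ_linear: "linear (cJ :: 'a::complex_hilbert \<Rightarrow> 'a)"
  by (rule linearI) (simp_all add: cJ_add cJ_scaleR)

lemma inner_cJ_left: "inner (cJ x) y = - inner x (cJ (y::'a::complex_hilbert))"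
  by (metis cJ_inner cJ_cJ inner_minus_left)

lemma cJ_0 [simp]: "cJ (0::'a::complex_hilbert) = 0"
  by (rule linear_0[OF cJ_linear])

lemma cblin_adj:
  fixes U :: "'a::complex_hilbert \<Rightarrow> 'a"
  assumes "cblin U"
  shows "cblin (adj U)"
proof -
  have U: "bounded_linear U" "\<And>x. U (cJ x) = cJ (U x)"
    using assms by (auto simp: cblin_def)
  have "adj U (cJ y) = cJ (adj U y)" for y
  proof (rule vector_eq_ldot[THEN iffD1], rule allI)
    show "inner x (adj U (cJ y)) = inner x (cJ (adj U y))" for x
      by (metis U inner_adj inner_cJ_left neg_equal_iff_equal inner_commute)
  qed
  then show ?thesis
    using U by (simp add: cblin_def bounded_linear_adj)
qed

lemma cblin_id: "cblin id"
  by (simp add: cblin_def id_def bounded_linear_ident)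

lemma cblin_comp: "cblin U \<Longrightarrow> cblin V \<Longrightarrow> cblin (U \<circ> V)"
  by (auto simp: cblin_def o_def intro: bounded_linear_compose[unfolded o_def])

lemma cblin_funpow: "cblin U \<Longrightarrow> cblin (U ^^ n)"
  by (induction n) (auto simp: cblin_id cblin_comp)

lemma pword_Nil [simp]: "pword T [] ms = id"
  by (simp add: pword_def)

lemma pword_Nil2 [simp]: "pword T ns [] = id"
  by (simp add: pword_def)

lemma pword_Cons [simp]: "pword T (n # ns) (m # ms) = (T ^^ n) \<circ> (adj T ^^ m) \<circ> pword T ns ms"
  by (simp add: pword_def)

lemma pword_append:
  "length ns = length ms \<Longrightarrow> pword T (ns @ ns') (ms @ ms') = pword T ns ms \<circ> pword T ns' ms'"
proof (induction ns arbitrary: ms)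
  case Nil
  then show ?case
    by simp
next
  case (Cons n ns)
  then obtain m ms0 where "ms = m # ms0" "length ns = length ms0"
    by (cases ms) auto
  with Cons.IH show ?case
    by (simp add: o_assoc)
qed

lemma cblin_pword:
  assumes "cblin T"
  shows "cblin (pword T ns ms)"
proof (induction ns arbitrary: ms)
  case Nil
  show ?case
    by (simp only: pword_Nil cblin_id)
next
  case (Cons n ns)
  show ?case
    by (cases ms)
      (simp_all only: pword_Nil2 pword_Cons cblin_id cblin_comp cblin_funpow cblin_adj assms Cons.IH)
qed

lemma funpow_mem: "(\<And>x. x \<in> N \<Longrightarrow> U x \<in> N) \<Longrightarrow> x \<in> N \<Longrightarrow> (U ^^ n) x \<in> N"
  by (induction n) auto

lemma pword_mem:
  assumes "\<And>x. x \<in> N \<Longrightarrow> T x \<in> N" "\<And>x. x \<in> N \<Longrightarrow> adj T x \<in> N" "x \<in> N"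
  shows "pword T ns ms x \<in> N"
  using assms(3)
proof (induction ns arbitrary: ms x)
  case Nil
  then show ?case
    by simp
next
  case (Cons n ns)
  then show ?case
    by (cases ms) (auto simp: assms(1,2) funpow_mem)
qed

lemma closed_csubspace_INT:
  "(\<And>i. i \<in> I \<Longrightarrow> closed_csubspace (M i)) \<Longrightarrow> closed_csubspace (\<Inter>i\<in>I. M i)"
  by (auto simp: closed_csubspace_def subspace_def)

lemma closed_csubspace_kernel:
  assumes "cblin U"
  shows "closed_csubspace {x. U x = 0}"
proof -
  interpret U: bounded_linear U
    using assms by (simp add: cblin_def)
  have "closed {x. U x = 0}"
    by (intro closed_Collect_eq continuous_intros U.continuous_on continuous_on_id)
  then show ?thesis
    using assms by (auto simp: closed_csubspace_def subspace_def cblin_def U.add U.scale)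
qed

lemma closed_csubspace_orthogonal_comp:
  assumes "closed_csubspace M"
  shows "closed_csubspace (orthogonal_comp M)"
proof -
  have "orthogonal_comp M = (\<Inter>x\<in>M. {y. inner x y = 0})"
    by (auto simp: orthogonal_comp_def orthogonal_def)
  moreover have "closed {y. inner x y = 0}" for x :: 'a
    by (intro closed_Collect_eq continuous_intros)
  ultimately have "closed (orthogonal_comp M)"
    by auto
  moreover have "cJ y \<in> orthogonal_comp M" if "y \<in> orthogonal_comp M" for y
  proof -
    have "inner x (cJ y) = - inner (cJ x) y" if "x \<in> M" for x
      by (simp add: inner_cJ_left)
    with \<open>y \<in> orthogonal_comp M\<close> assms show ?thesis
      by (auto simp: orthogonal_comp_def orthogonal_def closed_csubspace_def)
  qed
  ultimately show ?thesis
    by (simp add: closed_csubspace_def subspace_orthogonal_comp)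
qed

lemma orthogonal_decomposition:
  fixes M :: "'a::{real_inner,complete_space} set"
  assumes "closed M" "subspace M"
  shows "{x + y | x y. x \<in> M \<and> y \<in> orthogonal_comp M} = UNIV"
proof -
  have "z \<in> {x + y | x y. x \<in> M \<and> y \<in> orthogonal_comp M}" for z
  proof -
    obtain m where "m \<in> M" "z - m \<in> orthogonal_comp M"
      using orthogonal_projection_exists[OF assms] by blast
    then show ?thesis
      by force
  qed
  then show ?thesis
    by blast
qed

lemma orthogonal_comp_eqI:
  fixes H1 H2 :: "'a::real_inner set"
  assumes "\<forall>x\<in>H1. \<forall>y\<in>H2. inner x y = 0" "{x + y | x y. x \<in> H1 \<and> y \<in> H2} = UNIV"
  shows "H2 = orthogonal_comp H1"
proof
  show "H2 \<subseteq> orthogonal_comp H1"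
    using assms(1) by (auto simp: orthogonal_comp_def orthogonal_def)
  show "orthogonal_comp H1 \<subseteq> H2"
  proof
    fix z
    assume z: "z \<in> orthogonal_comp H1"
    obtain x y where "x \<in> H1" "y \<in> H2" "z = x + y"
      using assms(2) by blast
    with z assms(1) have "inner x x = 0"
      by (auto simp: orthogonal_comp_def orthogonal_def inner_add_right)
    with \<open>y \<in> H2\<close> \<open>z = x + y\<close> show "z \<in> H2"
      by simp
  qed
qed

lemma subspace_eq_summand:
  assumes "subspace K" "H1 \<subseteq> K" "K \<inter> H2 = {0}" "{x + y | x y. x \<in> H1 \<and> y \<in> H2} = UNIV"
  shows "K = H1"
proof
  show "K \<subseteq> H1"
  proof
    fix x
    assume "x \<in> K"
    have "x \<in> {x + y | x y. x \<in> H1 \<and> y \<in> H2}"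
      unfolding assms(4) by (rule UNIV_I)
    then obtain a b where "x = a + b" "a \<in> H1" "b \<in> H2"
      by blast
    have "x - a \<in> K"
      using assms(1,2) \<open>x \<in> K\<close> \<open>a \<in> H1\<close> by (blast intro: subspace_diff)
    then have "b = 0"
      using \<open>b \<in> H2\<close> \<open>x = a + b\<close> assms(3) by auto
    with \<open>a \<in> H1\<close> \<open>x = a + b\<close> show "x \<in> H1"
      by simp
  qed
qed (fact assms(2))

lemma reduces_iff:
  "reduces T M \<longleftrightarrow> closed_csubspace M \<and> (\<forall>x\<in>M. T x \<in> M) \<and> (\<forall>x\<in>M. adj T x \<in> M)"
  by (simp add: reduces_within_def)

lemma reduces_Int: "reduces T M \<Longrightarrow> reduces T N \<Longrightarrow> reduces T (M \<inter> N)"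
  by (auto simp: reduces_iff closed_csubspace_def subspace_inter closed_Int)

lemma reduces_orthogonal_comp:
  fixes T :: "'a::complex_hilbert \<Rightarrow> 'a"
  assumes "bounded_linear T" "reduces T M"
  shows "reduces T (orthogonal_comp M)"
proof -
  have "inner x (T y) = inner (adj T x) y" "inner x (adj T y) = inner (T x) y" for x y
    by (simp_all add: inner_adj inner_adj_left assms(1))
  with assms(2) closed_csubspace_orthogonal_comp[of M] show ?thesis
    by (auto simp: reduces_iff orthogonal_comp_def orthogonal_def)
qed

lemma reduces_within_iff_reduces:
  fixes T :: "'a::complex_hilbert \<Rightarrow> 'a"
  assumes "bounded_linear T" "reduces T M" "N \<subseteq> M"
  shows "reduces_within M T N \<longleftrightarrow> reduces T N"
proof -
  have "adj_on M T x = adj T x" if "x \<in> M" for x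
    using assms that by (intro adj_on_eq_adj) (auto simp: reduces_iff closed_csubspace_def)
  with assms(3) have "\<forall>x\<in>N. adj_on M T x \<in> N \<longleftrightarrow> adj T x \<in> N"
    by auto
  with assms(3) show ?thesis
    by (auto simp: reduces_within_def)
qed

definition C1r_decomposition :: "real \<Rightarrow> ('a::complex_hilbert \<Rightarrow> 'a) \<Rightarrow> 'a set \<Rightarrow> 'a set \<Rightarrow> bool"
  where "C1r_decomposition r T H1 H2 \<longleftrightarrow> closed_csubspace H1 \<and> closed_csubspace H2 \<and>
    (\<forall>x\<in>H1. \<forall>y\<in>H2. inner x y = 0) \<and> {x + y | x y. x \<in> H1 \<and> y \<in> H2} = UNIV \<and>
    reduces T H1 \<and> reduces T H2 \<and> CC1r_on r H1 T \<and> cnu_on r H2 T"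

lemma nonneg_form_eq_0_imp_eq_0:
  fixes D :: "'a::real_inner \<Rightarrow> 'a"
  assumes "linear D" "\<And>x y. inner (D x) y = inner x (D y)" "\<And>x. 0 \<le> inner (D x) x"
    and "inner (D y) y = 0"
  shows "D y = 0"
proof -
  interpret D: linear D
    by fact
  have "0 \<le> t\<^sup>2 * inner (D (D y)) (D y) - 2 * t * (- inner (D y) (D y))" for t
  proof -
    have "0 \<le> inner (D (y + t *\<^sub>R D y)) (y + t *\<^sub>R D y)"
      by (rule assms(3))
    also have "\<dots> = inner (D y) y + 2 * t * inner (D y) (D y) + t\<^sup>2 * inner (D (D y)) (D y)"
      using assms(2)[of y "D y"]
      by (simp add: D.add D.scale inner_add_left inner_add_right power2_eq_square algebra_simps
          inner_commute)
    finally show ?thesis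
      using assms(4) by simp
  qed
  then have "inner (D y) (D y) = 0"
    using linear_coeff_eq_0_if_quadratic_nonneg by fastforce
  then show ?thesis
    by simp
qed

lemma inner_gap_product_nonneg:
  fixes A :: "'a::real_inner \<Rightarrow> 'a"
  assumes "linear A" "\<And>x. a * inner x x \<le> inner (A x) x" "\<And>x. inner (A x) x \<le> b * inner x x"
    and "0 \<le> a" "a < b"
  shows "0 \<le> inner (A (b *\<^sub>R w - A w) - a *\<^sub>R (b *\<^sub>R w - A w)) (A w)"
proof -
  interpret A: linear A
    by fact
  define B where "B x = A x - a *\<^sub>R x" for x
  define C where "C x = b *\<^sub>R x - A x" for x
  have B_nonneg: "0 \<le> inner (B x) x" and C_nonneg: "0 \<le> inner (C x) x" for x
    using assms(2,3)[of x] by (simp_all add: B_def C_def inner_diff_left)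
  have "B (C w) = C (B w)"
    by (simp add: B_def C_def A.diff A.scale algebra_simps)
  then have BC_B: "0 \<le> inner (B (C w)) (B w)"
    using C_nonneg[of "B w"] by simp
  have "B w + C w = (b - a) *\<^sub>R w"
    by (simp add: B_def C_def algebra_simps)
  then have "(b - a) * inner (B (C w)) w = inner (B (C w)) (B w) + inner (B (C w)) (C w)"
    by (metis inner_add_right inner_scaleR_right)
  then have "0 \<le> (b - a) * inner (B (C w)) w"
    using BC_B B_nonneg[of "C w"] by linarith
  then have "0 \<le> inner (B (C w)) w"
    using assms(5) by (simp add: zero_le_mult_iff)
  moreover have "A w = a *\<^sub>R w + B w"
    by (simp add: B_def)
  ultimately have "0 \<le> inner (B (C w)) (A w)"
    using BC_B assms(4) by (simp add: inner_add_right)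
  then show ?thesis
    by (simp add: B_def C_def)
qed

lemma orth_proj_on_of_quadratic:
  fixes A :: "'a::complex_hilbert \<Rightarrow> 'a"
  assumes "cblin A" "\<And>x y. inner (A x) y = inner x (A y)" "subspace N" "\<And>x. x \<in> N \<Longrightarrow> A x \<in> N"
    and "\<And>x. x \<in> N \<Longrightarrow> A (A x) - (a + b) *\<^sub>R A x + (a * b) *\<^sub>R x = 0" "a \<noteq> b"
  shows "orth_proj_on N (\<lambda>x. (1 / (b - a)) *\<^sub>R (A x - a *\<^sub>R x))"
    (is "orth_proj_on N ?P")
proof -
  interpret A: bounded_linear A
    using assms(1) by (simp add: cblin_def)
  have "bounded_linear ?P"
    by (intro bounded_linear_const_scaleR bounded_linear_sub A.bounded_linear_axioms
        bounded_linear_const_scaleR bounded_linear_ident)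
  moreover have "?P (cJ x) = cJ (?P x)" for x
    using assms(1) by (simp add: cblin_def cJ_scaleR linear_diff[OF cJ_linear])
  moreover have "?P x \<in> N" if "x \<in> N" for x
    using that assms(3,4) by (simp add: subspace_diff subspace_scale)
  moreover have "?P (?P x) = ?P x" if "x \<in> N" for x
  proof -
    have AA: "A (A x) = (a + b) *\<^sub>R A x - (a * b) *\<^sub>R x"
      using assms(5)[OF that] by (simp add: algebra_simps)
    define u where "u = A x - a *\<^sub>R x"
    have eigen: "A u - a *\<^sub>R u = (b - a) *\<^sub>R u"
      using AA by (simp add: u_def A.diff A.scale algebra_simps)
    have "?P (?P x) = (1 / (b - a)) *\<^sub>R (1 / (b - a)) *\<^sub>R (A u - a *\<^sub>R u)"
      unfolding u_def[symmetric] by (simp add: A.scale algebra_simps)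
    also have "\<dots> = ?P x"
      using assms(6) by (simp add: eigen flip: u_def)
    finally show ?thesis .
  qed
  moreover have "inner (?P x) y = inner x (?P y)" for x y
    by (simp add: inner_diff_left inner_diff_right assms(2))
  ultimately show ?thesis
    by (simp add: orth_proj_on_def cblin_def)
qed

lemma orth_proj_on_complement:
  assumes "orth_proj_on N P" "subspace N"
  shows "orth_proj_on N (\<lambda>x. x - P x)"
proof -
  have P: "cblin P" "\<And>x. x \<in> N \<Longrightarrow> P x \<in> N" "\<And>x. x \<in> N \<Longrightarrow> P (P x) = P x"
    "\<And>x y. x \<in> N \<Longrightarrow> y \<in> N \<Longrightarrow> inner (P x) y = inner x (P y)"
    using assms(1) by (auto simp: orth_proj_on_def)
  interpret P: bounded_linear P
    using P(1) by (simp add: cblin_def)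
  have "cblin (\<lambda>x. x - P x)"
    using P(1) by (auto simp: cblin_def linear_diff[OF cJ_linear]
        intro: bounded_linear_sub bounded_linear_ident)
  with P assms(2) show ?thesis
    by (auto simp: orth_proj_on_def P.diff subspace_diff inner_diff_left inner_diff_right)
qed

section \<open>The defect operator of an operator in C_{1,r}\<close>

locale C1r_operator =
  fixes r :: real and T :: "'a::complex_hilbert \<Rightarrow> 'a"
  assumes r_pos: "0 < r" and r_less_1: "r < 1"
    and cblin_T: "cblin T" and C1r_T: "C1r_on r UNIV T"
begin

lemma r_sq_less_1: "r\<^sup>2 < 1"
  using r_pos r_less_1 by (simp add: power_less_one_iff abs_less_iff)

lemma bounded_linear_T: "bounded_linear T"
  using cblin_T by (simp add: cblin_def)

interpretation T: bounded_linear T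
  by (rule bounded_linear_T)

lemma inv_T_T [simp]: "inv T (T x) = x"
  and T_inv_T [simp]: "T (inv T x) = x"
  and norm_T_le: "norm (T x) \<le> norm x"
  and norm_inv_T_le: "r * norm (inv T x) \<le> norm x"
proof -
  obtain S where S: "\<And>x. S (T x) = x" "\<And>x. T (S x) = x"
    and "\<And>x. norm (T x) \<le> norm x" "\<And>x. norm (r *\<^sub>R S x) \<le> norm x"
    using C1r_T by (auto simp: C1r_on_def)
  moreover have "inv T = S"
    using S by (metis inv_f_f injI ext)
  ultimately show "inv T (T x) = x" "T (inv T x) = x" "norm (T x) \<le> norm x"
    "r * norm (inv T x) \<le> norm x"
    using r_pos by auto
qed

lemma cblin_inv_T: "cblin (inv T)"
proof -
  have "inv T (x + y) = inv T x + inv T y" "inv T (c *\<^sub>R x) = c *\<^sub>R inv T x" for x y c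
    by (metis T_inv_T inv_T_T T.add T.scale)+
  moreover have "norm (inv T x) \<le> norm x * (1 / r)" for x
    using norm_inv_T_le[of x] r_pos by (simp add: field_simps)
  moreover have "inv T (cJ x) = cJ (inv T x)" for x
    using cblin_T by (metis T_inv_T inv_T_T cblin_def)
  ultimately show ?thesis
    by (simp add: cblin_def bounded_linear_intro[where K = "1 / r"])
qed

lemma bounded_linear_inv_T: "bounded_linear (inv T)"
  using cblin_inv_T by (simp add: cblin_def)

lemma inv_T_mem_reducing:
  assumes "reduces T M" "y \<in> M"
  shows "inv T y \<in> M"
proof -
  have M: "closed M" "subspace M" "\<And>x. x \<in> M \<Longrightarrow> T x \<in> M"
    using assms(1) by (auto simp: reduces_iff closed_csubspace_def)
  have M_perp: "\<And>x. x \<in> orthogonal_comp M \<Longrightarrow> T x \<in> orthogonal_comp M"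
    using reduces_orthogonal_comp[OF bounded_linear_T assms(1)] by (simp add: reduces_iff)
  obtain a b where ab: "a \<in> M" "b \<in> orthogonal_comp M" "inv T y = a + b"
    using orthogonal_decomposition[OF M(1,2)] by blast
  have "T a + T b = y"
    using arg_cong[OF ab(3), of T] by (simp add: T.add)
  then have "T b = y - T a"
    by (simp add: algebra_simps)
  then have "T b \<in> M"
    using assms(2) ab(1) M(2,3) by (simp add: subspace_diff)
  moreover have "T b \<in> orthogonal_comp M"
    using ab(2) M_perp by simp
  ultimately have "T b \<in> M \<inter> orthogonal_comp M"
    by simp
  then have "T b = 0"
    using orthogonal_Int_0[OF M(2)] by blast
  then have "b = 0"
    by (metis inv_T_T T.zero)
  with ab show ?thesis
    by simp
qed

lemma C1r_on_reducing: "reduces T M \<Longrightarrow> C1r_on r M T"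
  unfolding C1r_on_def
  using inv_T_mem_reducing norm_T_le norm_inv_T_le r_pos
  by (intro conjI exI[of _ "inv T"]) (auto simp: reduces_iff)

definition A :: "'a \<Rightarrow> 'a" where
  "A x = adj T (T x)"

definition A_inv :: "'a \<Rightarrow> 'a" where
  "A_inv x = inv T (adj (inv T) x)"

definition defect :: "'a \<Rightarrow> 'a" where
  "defect x = (1 + r\<^sup>2) *\<^sub>R x - A x - r\<^sup>2 *\<^sub>R A_inv x"

lemma A_A_inv [simp]: "A (A_inv x) = x" and A_inv_A [simp]: "A_inv (A x) = x"
proof -
  have "adj T (adj (inv T) y) = y" "adj (inv T) (adj T y) = y" for y
    by (metis vector_eq_ldot inner_adj bounded_linear_T bounded_linear_inv_T T_inv_T inv_T_T)+
  then show "A (A_inv x) = x" "A_inv (A x) = x"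
    by (simp_all add: A_def A_inv_def)
qed

lemma cblin_A: "cblin A" and cblin_A_inv: "cblin A_inv"
  using cblin_comp[OF cblin_adj[OF cblin_T] cblin_T]
    cblin_comp[OF cblin_inv_T cblin_adj[OF cblin_inv_T]]
  by (simp_all add: A_def[abs_def] A_inv_def[abs_def] o_def)

lemma inner_A_sym: "inner (A x) y = inner x (A y)"
  and inner_A_inv_sym: "inner (A_inv x) y = inner x (A_inv y)"
  by (metis A_def A_inv_def inner_adj inner_commute bounded_linear_T bounded_linear_inv_T)+

lemma inner_A_self: "inner (A x) x = (norm (T x))\<^sup>2"
  and inner_A_inv_self: "inner (A_inv x) x = (norm (adj (inv T) x))\<^sup>2"
  by (metis A_def A_inv_def inner_adj inner_commute bounded_linear_T bounded_linear_inv_T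
      power2_norm_eq_inner)+

lemma inner_A_bounds: "r\<^sup>2 * inner x x \<le> inner (A x) x" "inner (A x) x \<le> inner x x"
proof -
  have "r * norm x \<le> norm (T x)"
    using norm_inv_T_le[of "T x"] by simp
  then have "(r * norm x)\<^sup>2 \<le> (norm (T x))\<^sup>2"
    using r_pos by (intro power_mono) auto
  then show "r\<^sup>2 * inner x x \<le> inner (A x) x"
    by (simp add: inner_A_self power_mult_distrib flip: power2_norm_eq_inner)
  show "inner (A x) x \<le> inner x x"
    using norm_T_le[of x] by (simp add: inner_A_self power_mono flip: power2_norm_eq_inner)
qed

lemma cblin_defect: "cblin defect"
proof -
  have "bounded_linear defect"
    using cblin_A cblin_A_inv unfolding defect_def[abs_def] cblin_def
    by (intro bounded_linear_sub bounded_linear_const_scaleR bounded_linear_ident) auto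
  moreover have "defect (cJ x) = cJ (defect x)" for x
    using cblin_A cblin_A_inv by (simp add: defect_def cblin_def cJ_scaleR linear_diff[OF cJ_linear])
  ultimately show ?thesis
    by (simp add: cblin_def)
qed

lemma inner_defect_sym: "inner (defect x) y = inner x (defect y)"
  by (simp add: defect_def inner_diff_left inner_diff_right inner_A_sym inner_A_inv_sym)

lemma inner_defect_self:
  "inner (defect x) x = (1 + r\<^sup>2) * (norm x)\<^sup>2 - (norm (T x))\<^sup>2 - r\<^sup>2 * (norm (adj (inv T) x))\<^sup>2"
  by (simp add: defect_def inner_diff_left inner_A_self inner_A_inv_self power2_norm_eq_inner)

text \<open>defect (T*T w) = (T*T - r^2)(I - T*T) w, a product of commuting nonnegative
  operators since r^2 \<le> T*T \<le> I.\<close>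

lemma inner_defect_nonneg: "0 \<le> inner (defect x) x"
proof -
  interpret A: bounded_linear A
    using cblin_A by (simp add: cblin_def)
  have "0 \<le> r\<^sup>2" "r\<^sup>2 < 1"
    using r_sq_less_1 by simp_all
  moreover have "inner (A y) y \<le> 1 * inner y y" for y
    using inner_A_bounds(2) by simp
  ultimately have "0 \<le> inner (A (A_inv x - x) - r\<^sup>2 *\<^sub>R (A_inv x - x)) x"
    using inner_gap_product_nonneg[OF A.linear_axioms inner_A_bounds(1), of 1 "A_inv x"]
    by (simp add: A.diff)
  also have "A (A_inv x - x) - r\<^sup>2 *\<^sub>R (A_inv x - x) = defect x"
    by (simp add: defect_def A.diff algebra_simps)
  finally show ?thesis .
qed

lemma defect_eq_0_iff:
  "defect x = 0 \<longleftrightarrow>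
    (1 + r\<^sup>2) * (norm x)\<^sup>2 - (norm (T x))\<^sup>2 - r\<^sup>2 * (norm (adj (inv T) x))\<^sup>2 = 0"
  using nonneg_form_eq_0_imp_eq_0[of defect x] cblin_defect inner_defect_sym inner_defect_nonneg
  by (auto simp: cblin_def bounded_linear.linear simp flip: inner_defect_self)

lemma defect_eq_0_if_eigenvector:
  assumes "A z = z \<or> A z = r\<^sup>2 *\<^sub>R z"
  shows "defect z = 0"
proof -
  interpret A_inv: bounded_linear A_inv
    using cblin_A_inv by (simp add: cblin_def)
  from assms show ?thesis
  proof
    assume "A z = z"
    then have "A_inv z = z"
      by (metis A_inv_A)
    with \<open>A z = z\<close> show ?thesis
      by (simp add: defect_def algebra_simps)
  next
    assume "A z = r\<^sup>2 *\<^sub>R z"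
    then have "r\<^sup>2 *\<^sub>R A_inv z = z"
      by (metis A_inv_A A_inv.scale)
    with \<open>A z = r\<^sup>2 *\<^sub>R z\<close> show ?thesis
      by (simp add: defect_def algebra_simps)
  qed
qed

lemma adj_on_reducing_T_T:
  assumes "reduces T N" "x \<in> N"
  shows "adj_on N T (T x) = A x"
  using assms adj_on_eq_adj[OF bounded_linear_T, of N "T x"]
  by (auto simp: A_def reduces_iff closed_csubspace_def)

lemma CC1r_on_imp_defect_eq_0:
  assumes "reduces T N" "CC1r_on r N T" "y \<in> N"
  shows "defect y = 0"
proof -
  obtain P0 P1 where P0: "orth_proj_on N P0" and P1: "orth_proj_on N P1"
    and sum: "\<And>x. x \<in> N \<Longrightarrow> P0 x + P1 x = x"
    and A_eq: "\<And>x. x \<in> N \<Longrightarrow> A x = P0 x + r\<^sup>2 *\<^sub>R P1 x"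
    using assms(1,2) adj_on_reducing_T_T by (fastforce simp: CC1r_on_def)
  have in_N: "P0 y \<in> N" "P1 y \<in> N"
    using P0 P1 assms(3) by (auto simp: orth_proj_on_def)
  have idem: "P0 (P0 y) = P0 y" "P1 (P1 y) = P1 y"
    using P0 P1 assms(3) by (auto simp: orth_proj_on_def)
  then have "P1 (P0 y) = 0" "P0 (P1 y) = 0"
    using sum[OF in_N(1)] sum[OF in_N(2)] by simp_all
  then have "A (P0 y) = P0 y" "A (P1 y) = r\<^sup>2 *\<^sub>R P1 y"
    using A_eq[OF in_N(1)] A_eq[OF in_N(2)] idem by simp_all
  then have "defect (P0 y) = 0" "defect (P1 y) = 0"
    using defect_eq_0_if_eigenvector by blast+
  then have "defect (P0 y + P1 y) = 0"
    using cblin_defect by (simp add: cblin_def linear_add bounded_linear.linear)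
  with sum[OF assms(3)] show ?thesis
    by simp
qed

text \<open>Where the defect vanishes, (T*T - I)(T*T - r^2) = 0, so P0 = (T*T - r^2)/(1 - r^2)
  and I - P0 are the spectral projections of T*T for the eigenvalues 1 and r^2.\<close>

lemma CC1r_on_if_defect_eq_0:
  assumes "reduces T N" "\<And>x. x \<in> N \<Longrightarrow> defect x = 0"
  shows "CC1r_on r N T"
proof -
  interpret A: bounded_linear A
    using cblin_A by (simp add: cblin_def)
  have N: "subspace N" "\<And>x. x \<in> N \<Longrightarrow> T x \<in> N" "\<And>x. x \<in> N \<Longrightarrow> A x \<in> N"
    using assms(1) by (auto simp: reduces_iff closed_csubspace_def A_def)
  define c where "c = 1 / (1 - r\<^sup>2)"
  define P0 where "P0 x = c *\<^sub>R (A x - r\<^sup>2 *\<^sub>R x)" for x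
  have "A (A x) - (r\<^sup>2 + 1) *\<^sub>R A x + (r\<^sup>2 * 1) *\<^sub>R x = 0" if "x \<in> N" for x
    using assms(2)[OF N(3)[OF that]] by (simp add: defect_def algebra_simps)
  then have "orth_proj_on N P0"
    using orth_proj_on_of_quadratic[OF cblin_A inner_A_sym N(1) N(3)] r_sq_less_1
    by (simp add: P0_def[abs_def] c_def)
  moreover have "A x = P0 x + r\<^sup>2 *\<^sub>R (x - P0 x)" for x
  proof -
    have "(1 - r\<^sup>2) * c = 1"
      using r_sq_less_1 by (simp add: c_def)
    then have "(1 - r\<^sup>2) *\<^sub>R P0 x = A x - r\<^sup>2 *\<^sub>R x"
      by (simp add: P0_def)
    then show ?thesis
      by (simp add: algebra_simps)
  qed
  ultimately show ?thesis
    unfolding CC1r_on_def using N orth_proj_on_complement adj_on_reducing_T_T[OF assms(1)]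
    by (intro conjI exI[of _ P0] exI[of _ "\<lambda>x. x - P0 x"]) auto
qed

lemma CC1r_on_iff_defect_eq_0:
  "reduces T N \<Longrightarrow> CC1r_on r N T \<longleftrightarrow> (\<forall>x\<in>N. defect x = 0)"
  using CC1r_on_imp_defect_eq_0 CC1r_on_if_defect_eq_0 by blast

section \<open>The maximal reducing subspace in \<C>_{1,r}\<close>

definition CC1r_part :: "'a set" where
  "CC1r_part = {x. \<forall>ns ms. length ns = length ms \<longrightarrow> ns \<noteq> [] \<longrightarrow> defect (pword T ns ms x) = 0}"

lemma CC1r_part_eq:
  "CC1r_part = (\<Inter>k\<in>{1..}. \<Inter>ns\<in>{ns. length ns = k}. \<Inter>ms\<in>{ms. length ms = k}.
     {x. (1 + r\<^sup>2) * (norm (pword T ns ms x))\<^sup>2 - (norm (T (pword T ns ms x)))\<^sup>2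
         - r\<^sup>2 * (norm (adj (inv T) (pword T ns ms x)))\<^sup>2 = 0})"
proof -
  have words: "(\<forall>k\<in>{1..}. \<forall>ns\<in>{ns. length ns = k}. \<forall>ms\<in>{ms. length ms = k}. P ns ms) \<longleftrightarrow>
    (\<forall>ns ms. length ns = length ms \<longrightarrow> ns \<noteq> [] \<longrightarrow> P ns ms)" for P :: "nat list \<Rightarrow> nat list \<Rightarrow> bool"
  proof
    assume H: "\<forall>k\<in>{1..}. \<forall>ns\<in>{ns. length ns = k}. \<forall>ms\<in>{ms. length ms = k}. P ns ms"
    show "\<forall>ns ms. length ns = length ms \<longrightarrow> ns \<noteq> [] \<longrightarrow> P ns ms"
    proof (intro allI impI)
      fix ns ms :: "nat list"
      assume "length ns = length ms" "ns \<noteq> []"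
      then have "length ns \<in> {1..}" "ms \<in> {ms. length ms = length ns}"
        by (cases ns; simp)+
      with H show "P ns ms"
        by blast
    qed
  qed (auto simp: Suc_le_eq)
  show ?thesis
    unfolding defect_eq_0_iff[symmetric] CC1r_part_def
    by (intro set_eqI) (simp only: mem_Collect_eq INT_iff words)
qed

lemma closed_csubspace_CC1r_part: "closed_csubspace CC1r_part"
proof -
  have "CC1r_part = (\<Inter>w\<in>{w. length (fst w) = length (snd w) \<and> fst w \<noteq> []}.
      {x. (defect \<circ> pword T (fst w) (snd w)) x = 0})"
    by (auto simp: CC1r_part_def)
  also have "closed_csubspace \<dots>"
    by (intro closed_csubspace_INT closed_csubspace_kernel cblin_comp cblin_defect cblin_pword
        cblin_T)
  finally show ?thesis .
qed

lemma defect_eq_0_on_CC1r_part: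
  assumes "x \<in> CC1r_part"
  shows "defect x = 0"
proof -
  have "defect (pword T [0] [0] x) = 0"
    using assms unfolding CC1r_part_def by blast
  then show ?thesis
    by simp
qed

lemma reduces_CC1r_part: "reduces T CC1r_part"
proof -
  have step: "pword T [n] [m] x \<in> CC1r_part" if "x \<in> CC1r_part" for n m x
  proof -
    have "defect (pword T ns ms (pword T [n] [m] x)) = 0"
      if "length ns = length ms" "ns \<noteq> []" for ns ms
    proof -
      have "length (ns @ [n]) = length (ms @ [m])" "ns @ [n] \<noteq> []"
        using that by simp_all
      then have "defect (pword T (ns @ [n]) (ms @ [m]) x) = 0"
        using \<open>x \<in> CC1r_part\<close> unfolding CC1r_part_def by blast
      then show ?thesis
        by (simp only: pword_append[OF that(1)] o_apply)
    qed
    then show ?thesis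
      by (simp add: CC1r_part_def)
  qed
  show ?thesis
    using step[of _ 1 0] step[of _ 0 1] by (simp add: reduces_iff closed_csubspace_CC1r_part)
qed

lemma subset_CC1r_part:
  assumes "reduces T N" "\<And>x. x \<in> N \<Longrightarrow> defect x = 0"
  shows "N \<subseteq> CC1r_part"
  using assms pword_mem[of N T] by (auto simp: CC1r_part_def reduces_iff)

lemma CC1r_on_CC1r_part: "CC1r_on r CC1r_part T"
  by (simp add: CC1r_on_iff_defect_eq_0 reduces_CC1r_part defect_eq_0_on_CC1r_part)

lemma CC1r_part_maximal: "reduces T N \<Longrightarrow> CC1r_on r N T \<Longrightarrow> N \<subseteq> CC1r_part"
  by (simp add: CC1r_on_iff_defect_eq_0 subset_CC1r_part)

lemma cnu_on_orthogonal_comp_CC1r_part: "cnu_on r (orthogonal_comp CC1r_part) T"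
proof -
  have red: "reduces T (orthogonal_comp CC1r_part)"
    by (rule reduces_orthogonal_comp[OF bounded_linear_T reduces_CC1r_part])
  have "N = {0}" if "reduces_within (orthogonal_comp CC1r_part) T N" "CC1r_on r N T" for N
  proof -
    have "N \<subseteq> orthogonal_comp CC1r_part"
      using that(1) by (simp add: reduces_within_def)
    moreover from this have "reduces T N"
      using that(1) reduces_within_iff_reduces[OF bounded_linear_T red] by blast
    moreover from this have "N \<subseteq> CC1r_part"
      using CC1r_part_maximal that(2) by blast
    moreover have "0 \<in> N"
      using \<open>reduces T N\<close> by (simp add: reduces_iff closed_csubspace_def subspace_0)
    moreover have "CC1r_part \<inter> orthogonal_comp CC1r_part = {0}"
      using closed_csubspace_CC1r_part by (simp add: closed_csubspace_def orthogonal_Int_0)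
    ultimately show ?thesis
      by blast
  qed
  with C1r_on_reducing[OF red] show ?thesis
    unfolding cnu_on_def by blast
qed

lemma C1r_decomposition_unique:
  assumes orth: "\<forall>x\<in>H1. \<forall>y\<in>H2. inner x y = 0"
    and decomp: "{x + y | x y. x \<in> H1 \<and> y \<in> H2} = UNIV"
    and red1: "reduces T H1" and red2: "reduces T H2"
    and CC1r_H1: "CC1r_on r H1 T" and cnu_H2: "cnu_on r H2 T"
  shows "H1 = CC1r_part" "H2 = orthogonal_comp CC1r_part"
proof -
  have "H1 \<subseteq> CC1r_part"
    using CC1r_part_maximal red1 CC1r_H1 by blast
  have "CC1r_part \<inter> H2 = {0}"
  proof -
    have red: "reduces T (CC1r_part \<inter> H2)"
      using reduces_CC1r_part red2 by (rule reduces_Int)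
    then have "CC1r_on r (CC1r_part \<inter> H2) T"
      by (simp add: CC1r_on_iff_defect_eq_0 defect_eq_0_on_CC1r_part)
    moreover have "reduces_within H2 T (CC1r_part \<inter> H2)"
      using reduces_within_iff_reduces[OF bounded_linear_T red2] red by blast
    ultimately show ?thesis
      using cnu_H2 unfolding cnu_on_def by metis
  qed
  moreover have "subspace CC1r_part"
    using closed_csubspace_CC1r_part by (simp add: closed_csubspace_def)
  ultimately have "CC1r_part = H1"
    using subspace_eq_summand[OF _ \<open>H1 \<subseteq> CC1r_part\<close> _ decomp] by blast
  then show "H1 = CC1r_part"
    by simp
  moreover have "H2 = orthogonal_comp H1"
    using orth decomp by (rule orthogonal_comp_eqI)
  ultimately show "H2 = orthogonal_comp CC1r_part"
    by simp
qed

lemma C1r_decomposition_CC1r_part: "C1r_decomposition r T CC1r_part (orthogonal_comp CC1r_part)"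
proof -
  have "closed CC1r_part" "subspace CC1r_part"
    using closed_csubspace_CC1r_part by (simp_all add: closed_csubspace_def)
  then have "{x + y | x y. x \<in> CC1r_part \<and> y \<in> orthogonal_comp CC1r_part} = UNIV"
    by (rule orthogonal_decomposition)
  moreover have "\<forall>x\<in>CC1r_part. \<forall>y\<in>orthogonal_comp CC1r_part. inner x y = 0"
    by (simp add: orthogonal_comp_def orthogonal_def)
  moreover note closed_csubspace_CC1r_part
    closed_csubspace_orthogonal_comp[OF closed_csubspace_CC1r_part]
    reduces_CC1r_part reduces_orthogonal_comp[OF bounded_linear_T reduces_CC1r_part]
    CC1r_on_CC1r_part cnu_on_orthogonal_comp_CC1r_part
  ultimately show ?thesis
    unfolding C1r_decomposition_def by (intro conjI)
qed

lemma C1r_decomposition_iff: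
  "C1r_decomposition r T H1 H2 \<longleftrightarrow> H1 = CC1r_part \<and> H2 = orthogonal_comp CC1r_part"
proof
  assume "C1r_decomposition r T H1 H2"
  then show "H1 = CC1r_part \<and> H2 = orthogonal_comp CC1r_part"
    unfolding C1r_decomposition_def by (elim conjE) (intro conjI C1r_decomposition_unique)
next
  assume "H1 = CC1r_part \<and> H2 = orthogonal_comp CC1r_part"
  with C1r_decomposition_CC1r_part show "C1r_decomposition r T H1 H2"
    by simp
qed

end

theorem theorem3p4:
  fixes T :: "'a::complex_hilbert \<Rightarrow> 'a" and r :: real
  assumes "0 < r" and "r < 1"
    and "cblin T" and "C1r_on r UNIV T"
  shows "(\<exists>!p. closed_csubspace (fst p) \<and> closed_csubspace (snd p) \<and>
              (\<forall>x\<in>fst p. \<forall>y\<in>snd p. inner x y = 0) \<and>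
              {x + y | x y. x \<in> fst p \<and> y \<in> snd p} = UNIV \<and>
              reduces T (fst p) \<and> reduces T (snd p) \<and>
              CC1r_on r (fst p) T \<and> cnu_on r (snd p) T)
       \<and> (\<forall>H1 H2. closed_csubspace H1 \<and> closed_csubspace H2 \<and>
              (\<forall>x\<in>H1. \<forall>y\<in>H2. inner x y = 0) \<and>
              {x + y | x y. x \<in> H1 \<and> y \<in> H2} = UNIV \<and>
              reduces T H1 \<and> reduces T H2 \<and>
              CC1r_on r H1 T \<and> cnu_on r H2 T \<longrightarrow>
            (\<forall>N. reduces T N \<and> CC1r_on r N T \<longrightarrow> N \<subseteq> H1) \<and>
            H1 = (\<Inter>k\<in>{1..}. \<Inter>ns\<in>{ns. length ns = k}. \<Inter>ms\<in>{ms. length ms = k}.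
                   {x. (1 + r\<^sup>2) * (norm (pword T ns ms x))\<^sup>2
                       - (norm (T (pword T ns ms x)))\<^sup>2
                       - r\<^sup>2 * (norm (adj (inv T) (pword T ns ms x)))\<^sup>2 = 0}))"
proof -
  interpret C1r_operator r T
    using assms by unfold_locales
  show ?thesis
    unfolding C1r_decomposition_def[symmetric] C1r_decomposition_iff CC1r_part_eq[symmetric]
    using CC1r_part_maximal by auto
qed

end
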